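(* Let $\Phi:\{0,1\}^n\to\{0,1\}^n$, $\mu\in\{0,1\}^n$ and $\rho\in P_n$. Then: a) $\overline{W}[\Phi^\rho(\mu,\cdot)]=\overline{W}[\omega_\rho(\mu)]$; b) $Or_\rho(\mu)\subset\overline{W}[\Phi^\rho(\mu,\cdot)]$, so $\overline{W}[\Phi^\rho(\mu,\cdot)]\neq\emptyset$; c) $\underline{W}[\Phi^\rho(\mu,\cdot)]\subset\underline{W}[\omega_\rho(\mu)]$; d) $\underline{W}[\Phi^\rho(\mu,\cdot)]\neq\emptyset$ if and only if $\omega_\rho(\mu)$ has exactly one element; thus if $\omega_\rho(\mu)$ has exactly one element, then $\underline{W}[\Phi^\rho(\mu,\cdot)]$ and $\underline{W}[\omega_\rho(\mu)]$ are non-empty; e) if $\omega_\rho(\mu)=\{\mu'\}$ for some $\mu'\in\mathbf{B}^n$, then $\underline{W}[\Phi^\rho(\mu,\cdot)]=\underline{W}[\omega_\rho(\mu)]=\underline{W}(\mu')$.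
   Context: Let $\mathbf{B}=\{0,1\}$ (discrete topology), $n\ge1$, $\Phi:\mathbf{B}^n\to\mathbf{B}^n$. For $\nu\in\mathbf{B}^n$: $\Phi^\nu_i(\mu)=\mu_i$ if $\nu_i=0$, $=\Phi_i(\mu)$ if $\nu_i=1$; $\Phi^{\alpha^0\dots\alpha^k}=\Phi^{\alpha^k}\circ\cdots\circ\Phi^{\alpha^0}$. A sequence $(\alpha^k)_{k\in\mathbf{N}}$ in $\mathbf{B}^n$ is progressive if each $\{k:\alpha^k_i=1\}$ is infinite. $Seq$ = strictly increasing real sequences unbounded above. $P_n$ = functions $\rho:\mathbf{R}\to\mathbf{B}^n$ with $\rho(t_k)=\alpha^k$, $\rho(t)=0$ for $t\notin\{t_k\}$, where $\alpha$ progressive, $(t_k)\in Seq$. Orbit: $\Phi^\rho(\mu,t)=\mu$ for $t<t_0$, $=\Phi^{\alpha^0\dots\alpha^k}(\mu)$ for $t\in[t_k,t_{k+1})$; $Or_\rho(\mu)=\{\Phi^\rho(\mu,t):t\in\mathbf{R}\}$. $\omega_\rho(\mu)=\{\mu':\exists(s_k)\in Seq,\ \Phi^\rho(\mu,s_k)=\mu'$ for all large $k\}$. For a point $\mu'$: $\underline{W}(\mu')=\{\mu'':\forall\rho'\in P_n,\ \omega_{\rho'}(\mu'')\subset\{\mu'\}\}$. Basins of the orbit and of the $\omega$-limit set: $\overline{W}[\Phi^\rho(\mu,\cdot)]=\{\mu':\exists\rho'\in P_n,\exists t'\in\mathbf{R},\forall t\ge t',\ \Phi^{\rho'}(\mu',t)=\Phi^\rho(\mu,t)\}$,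 $\underline{W}[\Phi^\rho(\mu,\cdot)]=\{\mu':\forall\rho'\in P_n,\exists t'\in\mathbf{R},\forall t\ge t',\ \Phi^{\rho'}(\mu',t)=\Phi^\rho(\mu,t)\}$, $\overline{W}[\omega_\rho(\mu)]=\{\mu':\exists\rho'\in P_n,\ \omega_{\rho'}(\mu')=\omega_\rho(\mu)\}$, $\underline{W}[\omega_\rho(\mu)]=\{\mu':\forall\rho'\in P_n,\ \omega_{\rho'}(\mu')=\omega_\rho(\mu)\}$. *)

theory Defs
  imports Main "HOL-Library.Infinite_Set" Complex_Main
begin

text \<open>Points of B^n are functions 'n \<Rightarrow> bool for a finite index type 'n (n = CARD('n)).\<close>

definition Phi_nu :: "(('n \<Rightarrow> bool) \<Rightarrow> ('n \<Rightarrow> bool)) \<Rightarrow> ('n \<Rightarrow> bool) \<Rightarrow> ('n \<Rightarrow> bool) \<Rightarrow> ('n \<Rightarrow> bool)" where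
  "Phi_nu Phi nu mu = (\<lambda>i. if nu i then Phi mu i else mu i)"

fun Phi_comp :: "(('n \<Rightarrow> bool) \<Rightarrow> ('n \<Rightarrow> bool)) \<Rightarrow> (nat \<Rightarrow> 'n \<Rightarrow> bool) \<Rightarrow> nat \<Rightarrow> ('n \<Rightarrow> bool) \<Rightarrow> ('n \<Rightarrow> bool)" where
  "Phi_comp Phi alpha 0 mu = Phi_nu Phi (alpha 0) mu"
| "Phi_comp Phi alpha (Suc k) mu = Phi_nu Phi (alpha (Suc k)) (Phi_comp Phi alpha k mu)"

definition progressive :: "(nat \<Rightarrow> 'n \<Rightarrow> bool) \<Rightarrow> bool" where
  "progressive alpha \<longleftrightarrow> (\<forall>i. infinite {k. alpha k i})"

definition Seq :: "(nat \<Rightarrow> real) set" where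
  "Seq = {t. strict_mono t \<and> (\<forall>M. \<exists>k. M < t k)}"

definition represents :: "(real \<Rightarrow> 'n \<Rightarrow> bool) \<Rightarrow> (nat \<Rightarrow> 'n \<Rightarrow> bool) \<Rightarrow> (nat \<Rightarrow> real) \<Rightarrow> bool" where
  "represents rho alpha t \<longleftrightarrow> progressive alpha \<and> t \<in> Seq \<and> (\<forall>k. rho (t k) = alpha k)
     \<and> (\<forall>s. s \<notin> range t \<longrightarrow> rho s = (\<lambda>_. False))"

definition P_n :: "(real \<Rightarrow> 'n \<Rightarrow> bool) set" where
  "P_n = {rho. \<exists>alpha t. represents rho alpha t}"

definition orbit_at :: "(('n \<Rightarrow> bool) \<Rightarrow> ('n \<Rightarrow> bool)) \<Rightarrow> (nat \<Rightarrow> 'n \<Rightarrow> bool) \<Rightarrow> (nat \<Rightarrow> real) \<Rightarrow> ('n \<Rightarrow> bool) \<Rightarrow> real \<Rightarrow> ('n \<Rightarrow> bool)" where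
  "orbit_at Phi alpha t mu s =
     (if s < t 0 then mu else Phi_comp Phi alpha (THE k. t k \<le> s \<and> s < t (Suc k)) mu)"

text \<open>Phi^rho(mu, s), computed from some representation (alpha, t) of rho
  (the value does not depend on the chosen representation).\<close>
definition Phi_rho :: "(('n \<Rightarrow> bool) \<Rightarrow> ('n \<Rightarrow> bool)) \<Rightarrow> (real \<Rightarrow> 'n \<Rightarrow> bool) \<Rightarrow> ('n \<Rightarrow> bool) \<Rightarrow> real \<Rightarrow> ('n \<Rightarrow> bool)" where
  "Phi_rho Phi rho mu s =
     (let r = (SOME r. represents rho (fst r) (snd r)) in orbit_at Phi (fst r) (snd r) mu s)"

definition Or_rho :: "(('n \<Rightarrow> bool) \<Rightarrow> ('n \<Rightarrow> bool)) \<Rightarrow> (real \<Rightarrow> 'n \<Rightarrow> bool) \<Rightarrow> ('n \<Rightarrow> bool) \<Rightarrow> ('n \<Rightarrow> bool) set" where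
  "Or_rho Phi rho mu = range (Phi_rho Phi rho mu)"

definition omega_rho :: "(('n \<Rightarrow> bool) \<Rightarrow> ('n \<Rightarrow> bool)) \<Rightarrow> (real \<Rightarrow> 'n \<Rightarrow> bool) \<Rightarrow> ('n \<Rightarrow> bool) \<Rightarrow> ('n \<Rightarrow> bool) set" where
  "omega_rho Phi rho mu = {mu'. \<exists>s \<in> Seq. \<forall>\<^sub>F k in sequentially. Phi_rho Phi rho mu (s k) = mu'}"

definition W_low_pt :: "(('n \<Rightarrow> bool) \<Rightarrow> ('n \<Rightarrow> bool)) \<Rightarrow> ('n \<Rightarrow> bool) \<Rightarrow> ('n \<Rightarrow> bool) set" where
  "W_low_pt Phi mu' = {mu''. \<forall>rho' \<in> P_n. omega_rho Phi rho' mu'' \<subseteq> {mu'}}"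

definition W_up_orb :: "(('n \<Rightarrow> bool) \<Rightarrow> ('n \<Rightarrow> bool)) \<Rightarrow> (real \<Rightarrow> 'n \<Rightarrow> bool) \<Rightarrow> ('n \<Rightarrow> bool) \<Rightarrow> ('n \<Rightarrow> bool) set" where
  "W_up_orb Phi rho mu = {mu'. \<exists>rho' \<in> P_n. \<exists>t'. \<forall>t\<ge>t'. Phi_rho Phi rho' mu' t = Phi_rho Phi rho mu t}"

definition W_low_orb :: "(('n \<Rightarrow> bool) \<Rightarrow> ('n \<Rightarrow> bool)) \<Rightarrow> (real \<Rightarrow> 'n \<Rightarrow> bool) \<Rightarrow> ('n \<Rightarrow> bool) \<Rightarrow> ('n \<Rightarrow> bool) set" where
  "W_low_orb Phi rho mu = {mu'. \<forall>rho' \<in> P_n. \<exists>t'. \<forall>t\<ge>t'. Phi_rho Phi rho' mu' t = Phi_rho Phi rho mu t}"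

definition W_up_omega :: "(('n \<Rightarrow> bool) \<Rightarrow> ('n \<Rightarrow> bool)) \<Rightarrow> (real \<Rightarrow> 'n \<Rightarrow> bool) \<Rightarrow> ('n \<Rightarrow> bool) \<Rightarrow> ('n \<Rightarrow> bool) set" where
  "W_up_omega Phi rho mu = {mu'. \<exists>rho' \<in> P_n. omega_rho Phi rho' mu' = omega_rho Phi rho mu}"

definition W_low_omega :: "(('n \<Rightarrow> bool) \<Rightarrow> ('n \<Rightarrow> bool)) \<Rightarrow> (real \<Rightarrow> 'n \<Rightarrow> bool) \<Rightarrow> ('n \<Rightarrow> bool) \<Rightarrow> ('n \<Rightarrow> bool) set" where
  "W_low_omega Phi rho mu = {mu'. \<forall>rho' \<in> P_n. omega_rho Phi rho' mu' = omega_rho Phi rho mu}"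

end

theory Submission
  imports Defs
begin

text \<open>
  The representation of a schedule rho is not unique (an update vector may be all False), so
  the orbit is first characterised without one: it starts at mu and, across every interval on
  which rho is idle, jumps at the right end r to Phi^rho(r) of its previous value. This
  description makes orbits of spliced and time-shifted schedules easy to compute.

  a) and b): if the rho'-orbit of mu' reaches a value at time c1 that the rho-orbit of mu takes
  again at a later time c2, run rho' up to c1, stay idle until c2 and continue with rho; the
  resulting orbit of mu' coincides with that of mu after c2. c) holds because eventually equal
  functions have equal omega-limit sets. d) and e): if mu' is attracted under every schedule,
  in particular under every time shift of rho, then the orbit of mu is eventually d-periodic for
  every d and hence eventually constant; conversely an eventual constant value is a fixed point
  of Phi, since each coordinate is updated infinitely often, and a fixed point is attracted to
  itself under every schedule.
\<close>

lemma Phi_nu_idle [simp]: "Phi_nu Phi (\<lambda>_. False) x = x"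
  by (simp add: Phi_nu_def)

lemma Seq_unbounded: "t \<in> Seq \<Longrightarrow> \<exists>k. M < t k"
  by (simp add: Seq_def)

lemma Seq_threshold:
  assumes "t \<in> Seq"
  obtains K where "\<And>k. t k \<le> c \<longleftrightarrow> k < K"
proof
  define K where "K = (LEAST k. c < t k)"
  have mono: "strict_mono t" using assms by (simp add: Seq_def)
  have cK: "c < t K" unfolding K_def by (rule LeastI_ex) (rule Seq_unbounded[OF assms])
  fix k show "t k \<le> c \<longleftrightarrow> k < K"
  proof
    assume "t k \<le> c"
    with cK have "t k < t K" by simp
    then show "k < K" using strict_mono_less[OF mono] by simp
  next
    assume "k < K"
    then show "t k \<le> c" using not_less_Least[of k "\<lambda>k. c < t k"] by (simp add: K_def)
  qed
qed

lemma Seq_append: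
  assumes "t1 \<in> Seq" "t2 \<in> Seq" and junction: "\<And>k. k < K1 \<Longrightarrow> t1 k < t2 K2"
  shows "(\<lambda>k. if k < K1 then t1 k else t2 (k - K1 + K2)) \<in> Seq"
proof -
  define t where "t = (\<lambda>k. if k < K1 then t1 k else t2 (k - K1 + K2))"
  have mono1: "strict_mono t1" and mono2: "strict_mono t2" using assms(1,2) by (simp_all add: Seq_def)
  have tail: "t (k + K1) = t2 (k + K2)" for k by (simp add: t_def)
  have "t k < t (Suc k)" for k
  proof -
    consider "Suc k < K1" | "Suc k = K1" | "K1 \<le> k" by linarith
    then show ?thesis
    proof cases
      case 3
      define j where "j = k - K1"
      with 3 have "k = j + K1" by simp
      then show ?thesis using tail[of j] tail[of "Suc j"] by (simp add: strict_monoD[OF mono2])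
    qed (simp_all add: t_def junction strict_monoD[OF mono1])
  qed
  moreover have "\<exists>k. M < t k" for M
  proof -
    obtain k where "M < t2 k" using Seq_unbounded[OF assms(2)] by blast
    also have "t2 k \<le> t2 (k + K2)" using strict_mono_less_eq[OF mono2] by simp
    finally show ?thesis unfolding tail[symmetric] by blast
  qed
  ultimately show ?thesis by (simp add: Seq_def strict_mono_Suc_iff flip: t_def)
qed

lemma represents_Seq: "represents rho a t \<Longrightarrow> t \<in> Seq"
  by (simp add: represents_def)

lemma represents_strict_mono: "represents rho a t \<Longrightarrow> strict_mono t"
  by (simp add: represents_def Seq_def)

lemma represents_at_times: "represents rho a t \<Longrightarrow> rho (t k) = a k"
  by (simp add: represents_def)

lemma represents_off_times: "represents rho a t \<Longrightarrow> s \<notin> range t \<Longrightarrow> rho s = (\<lambda>_. False)"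
  by (simp add: represents_def)

lemma represents_before:
  assumes "represents rho a t" "q < t 0"
  shows "rho q = (\<lambda>_. False)"
proof (rule represents_off_times[OF assms(1)])
  show "q \<notin> range t"
  proof
    assume "q \<in> range t"
    then obtain j where "t j < t 0" using assms(2) by blast
    then show False using strict_mono_less[OF represents_strict_mono[OF assms(1)]] by simp
  qed
qed

lemma represents_gap:
  assumes "represents rho a t" "t k < q" "q < t (Suc k)"
  shows "rho q = (\<lambda>_. False)"
proof (rule represents_off_times[OF assms(1)])
  show "q \<notin> range t"
  proof
    assume "q \<in> range t"
    then obtain j where "t k < t j" "t j < t (Suc k)" using assms(2,3) by blast
    then show False using strict_mono_less[OF represents_strict_mono[OF assms(1)]] by simp
  qed
qed

lemma represents_interval:
  assumes "represents rho a t" "t 0 \<le> s"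
  obtains k where "t k \<le> s" "s < t (Suc k)"
proof -
  obtain K where K: "\<And>k. t k \<le> s \<longleftrightarrow> k < K"
    using Seq_threshold[OF represents_Seq[OF assms(1)]] by blast
  with assms(2) obtain k where "K = Suc k" using gr0_conv_Suc by blast
  with K[of k] K[of "Suc k"] show thesis by (intro that) auto
qed

lemma orbit_at_before: "s < t 0 \<Longrightarrow> orbit_at Phi a t mu s = mu"
  by (simp add: orbit_at_def)

lemma orbit_at_interval:
  assumes "represents rho a t" "t k \<le> s" "s < t (Suc k)"
  shows "orbit_at Phi a t mu s = Phi_comp Phi a k mu"
proof -
  have mono: "strict_mono t" by (rule represents_strict_mono[OF assms(1)])
  have "(THE j. t j \<le> s \<and> s < t (Suc j)) = k"
  proof (rule the_equality)
    fix j assume "t j \<le> s \<and> s < t (Suc j)"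
    with assms(2,3) have "t j < t (Suc k)" "t k < t (Suc j)" by auto
    then show "j = k" using strict_mono_less[OF mono] by simp
  qed (use assms in simp)
  moreover have "t 0 \<le> t k" using strict_mono_less_eq[OF mono] by simp
  ultimately show ?thesis using assms(2) by (simp add: orbit_at_def)
qed

lemma orbit_at_times:
  assumes rep: "represents rho a t"
  shows "orbit_at Phi a t mu (t k) = Phi_comp Phi a k mu"
  using strict_monoD[OF represents_strict_mono[OF rep], of k "Suc k"]
  by (intro orbit_at_interval[OF rep]) auto

lemma Phi_comp_idle:
  "(\<And>m. m \<le> k \<Longrightarrow> a m = (\<lambda>_. False)) \<Longrightarrow> Phi_comp Phi a k mu = mu"
  by (induction k) auto

lemma Phi_comp_idle_tail:
  "j \<le> k \<Longrightarrow> (\<And>m. j < m \<Longrightarrow> m \<le> k \<Longrightarrow> a m = (\<lambda>_. False))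
    \<Longrightarrow> Phi_comp Phi a k mu = Phi_comp Phi a j mu"
  by (induction k) (auto simp: le_Suc_eq)

lemma orbit_at_const:
  assumes rep: "represents rho a t" and "s1 \<le> s2"
    and idle: "\<And>q. s1 < q \<Longrightarrow> q \<le> s2 \<Longrightarrow> rho q = (\<lambda>_. False)"
  shows "orbit_at Phi a t mu s1 = orbit_at Phi a t mu s2"
proof (cases "s2 < t 0")
  case True
  with \<open>s1 \<le> s2\<close> show ?thesis by (simp add: orbit_at_before)
next
  case False
  have mono: "strict_mono t" by (rule represents_strict_mono[OF rep])
  from False have "t 0 \<le> s2" by simp
  then obtain k where k: "t k \<le> s2" "s2 < t (Suc k)" by (rule represents_interval[OF rep])
  have a_idle: "a m = (\<lambda>_. False)" if "m \<le> k" "s1 < t m" for m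
  proof -
    have "t m \<le> t k" using strict_mono_less_eq[OF mono] \<open>m \<le> k\<close> by simp
    with k that have "rho (t m) = (\<lambda>_. False)" by (intro idle) simp_all
    then show ?thesis by (simp add: represents_at_times[OF rep])
  qed
  show ?thesis
  proof (cases "s1 < t 0")
    case True
    have "s1 < t m" for m using True strict_mono_less_eq[OF mono, of 0 m] by simp
    then have "Phi_comp Phi a k mu = mu" by (simp add: Phi_comp_idle a_idle)
    with True show ?thesis by (simp add: orbit_at_before orbit_at_interval[OF rep k])
  next
    case False
    then have "t 0 \<le> s1" by simp
    then obtain j where j: "t j \<le> s1" "s1 < t (Suc j)" by (rule represents_interval[OF rep])
    with k \<open>s1 \<le> s2\<close> have "t j < t (Suc k)" by simp
    then have "j \<le> k" using strict_mono_less[OF mono] by simp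
    moreover have "s1 < t m" if "j < m" for m
      using j(2) strict_mono_less_eq[OF mono, of "Suc j" m] that by simp
    ultimately have "Phi_comp Phi a k mu = Phi_comp Phi a j mu"
      by (simp add: Phi_comp_idle_tail a_idle)
    then show ?thesis by (simp add: orbit_at_interval[OF rep k] orbit_at_interval[OF rep j])
  qed
qed

lemma orbit_at_jump:
  assumes rep: "represents rho a t" and "s < r"
    and idle: "\<And>q. s < q \<Longrightarrow> q < r \<Longrightarrow> rho q = (\<lambda>_. False)"
  shows "orbit_at Phi a t mu r = Phi_nu Phi (rho r) (orbit_at Phi a t mu s)"
proof (cases "r \<in> range t")
  case False
  then have "rho r = (\<lambda>_. False)" by (rule represents_off_times[OF rep])
  moreover have "orbit_at Phi a t mu s = orbit_at Phi a t mu r"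
    using \<open>s < r\<close> idle \<open>rho r = _\<close> by (intro orbit_at_const[OF rep]) (auto simp: le_less)
  ultimately show ?thesis by simp
next
  case True
  then obtain k where r: "r = t k" by blast
  have mono: "strict_mono t" by (rule represents_strict_mono[OF rep])
  show ?thesis
  proof (cases k)
    case 0
    with r \<open>s < r\<close> show ?thesis
      by (simp add: orbit_at_before orbit_at_times[OF rep] represents_at_times[OF rep])
  next
    case (Suc j)
    have tj: "t j < t k" using Suc strict_monoD[OF mono] by simp
    define s' where "s' = max s (t j)"
    have "orbit_at Phi a t mu s = orbit_at Phi a t mu s'"
      using idle tj r by (intro orbit_at_const[OF rep]) (auto simp: s'_def)
    also have "\<dots> = Phi_comp Phi a j mu"
      using \<open>s < r\<close> tj r Suc by (intro orbit_at_interval[OF rep]) (auto simp: s'_def)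
    finally show ?thesis
      using Suc r by (simp add: orbit_at_times[OF rep] represents_at_times[OF rep])
  qed
qed

section \<open>Orbits without representations\<close>

definition is_orbit ::
    "(('n \<Rightarrow> bool) \<Rightarrow> ('n \<Rightarrow> bool)) \<Rightarrow> (real \<Rightarrow> 'n \<Rightarrow> bool) \<Rightarrow> ('n \<Rightarrow> bool)
      \<Rightarrow> (real \<Rightarrow> 'n \<Rightarrow> bool) \<Rightarrow> bool" where
  "is_orbit Phi rho x Ob \<longleftrightarrow> (\<exists>T. \<forall>s<T. Ob s = x)
     \<and> (\<forall>s r. s < r \<longrightarrow> (\<forall>q. s < q \<and> q < r \<longrightarrow> rho q = (\<lambda>_. False))
          \<longrightarrow> Ob r = Phi_nu Phi (rho r) (Ob s))"

lemma is_orbit_initial: "is_orbit Phi rho x Ob \<Longrightarrow> \<exists>T. \<forall>s<T. Ob s = x"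
  by (simp add: is_orbit_def)

lemma is_orbit_jump:
  "is_orbit Phi rho x Ob \<Longrightarrow> s < r \<Longrightarrow> (\<And>q. s < q \<Longrightarrow> q < r \<Longrightarrow> rho q = (\<lambda>_. False))
    \<Longrightarrow> Ob r = Phi_nu Phi (rho r) (Ob s)"
  unfolding is_orbit_def by blast

lemma is_orbit_const:
  assumes "is_orbit Phi rho x Ob" "s \<le> r" "\<And>q. s < q \<Longrightarrow> q \<le> r \<Longrightarrow> rho q = (\<lambda>_. False)"
  shows "Ob s = Ob r"
proof (cases "s = r")
  case False
  with assms have "Ob r = Phi_nu Phi (rho r) (Ob s)" by (intro is_orbit_jump) auto
  with assms False show ?thesis by simp
qed simp

lemma orbit_at_is_orbit:
  "represents rho a t \<Longrightarrow> is_orbit Phi rho mu (orbit_at Phi a t mu)"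
  unfolding is_orbit_def using orbit_at_before orbit_at_jump by blast

lemma is_orbit_at_first_time:
  assumes rep: "represents rho a t" and orb: "is_orbit Phi rho x Ob"
  shows "Ob (t 0) = Phi_nu Phi (a 0) x"
proof -
  obtain T where T: "\<forall>s<T. Ob s = x" using is_orbit_initial[OF orb] by blast
  define s where "s = min T (t 0) - 1"
  have "s < t 0" "s < T" by (simp_all add: s_def)
  have "Ob (t 0) = Phi_nu Phi (rho (t 0)) (Ob s)"
    using \<open>s < t 0\<close> by (rule is_orbit_jump[OF orb]) (simp add: represents_before[OF rep])
  with T \<open>s < T\<close> show ?thesis by (simp add: represents_at_times[OF rep])
qed

lemma is_orbit_at_next_time:
  assumes rep: "represents rho a t" and orb: "is_orbit Phi rho x Ob"
  shows "Ob (t (Suc k)) = Phi_nu Phi (a (Suc k)) (Ob (t k))"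
proof -
  have "t k < t (Suc k)" by (rule strict_monoD[OF represents_strict_mono[OF rep]]) simp
  then have "Ob (t (Suc k)) = Phi_nu Phi (rho (t (Suc k))) (Ob (t k))"
    by (rule is_orbit_jump[OF orb]) (simp add: represents_gap[OF rep])
  then show ?thesis by (simp add: represents_at_times[OF rep])
qed

lemma is_orbit_eq_orbit_at:
  assumes rep: "represents rho a t" and orb: "is_orbit Phi rho x Ob"
  shows "Ob = orbit_at Phi a t x"
proof
  have at_times: "Ob (t k) = Phi_comp Phi a k x" for k
    by (induction k)
      (simp_all add: is_orbit_at_first_time[OF rep orb] is_orbit_at_next_time[OF rep orb])
  fix s show "Ob s = orbit_at Phi a t x s"
  proof (cases "s < t 0")
    case True
    obtain T where T: "\<forall>s<T. Ob s = x" using is_orbit_initial[OF orb] by blast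
    define s' where "s' = min T s - 1"
    have "s' \<le> s" "s' < T" by (simp_all add: s'_def)
    then have "Ob s' = Ob s"
      using True by (intro is_orbit_const[OF orb]) (simp_all add: represents_before[OF rep])
    with T \<open>s' < T\<close> True show ?thesis by (simp add: orbit_at_before)
  next
    case False
    then have "t 0 \<le> s" by simp
    then obtain k where k: "t k \<le> s" "s < t (Suc k)" by (rule represents_interval[OF rep])
    then have "Ob (t k) = Ob s"
      by (intro is_orbit_const[OF orb]) (simp_all add: represents_gap[OF rep])
    with k show ?thesis by (simp add: at_times orbit_at_interval[OF rep])
  qed
qed

lemma Phi_rho_eq_orbit_at:
  assumes rep: "represents rho a t"
  shows "Phi_rho Phi rho mu = orbit_at Phi a t mu"
proof -
  define r where "r = (SOME r. represents rho (fst r) (snd r))"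
  have "represents rho (fst r) (snd r)"
    unfolding r_def by (rule someI[of _ "(a, t)"]) (simp add: rep)
  moreover have "Phi_rho Phi rho mu = orbit_at Phi (fst r) (snd r) mu"
    by (simp add: fun_eq_iff Phi_rho_def r_def Let_def)
  ultimately have "is_orbit Phi rho mu (Phi_rho Phi rho mu)"
    by (simp add: orbit_at_is_orbit)
  then show ?thesis by (rule is_orbit_eq_orbit_at[OF rep])
qed

lemma Phi_rho_is_orbit:
  assumes "rho \<in> P_n"
  shows "is_orbit Phi rho mu (Phi_rho Phi rho mu)"
proof -
  obtain a t where rep: "represents rho a t" using assms by (auto simp: P_n_def)
  show ?thesis unfolding Phi_rho_eq_orbit_at[OF rep] by (rule orbit_at_is_orbit[OF rep])
qed

lemma Phi_rho_unique:
  assumes "rho \<in> P_n" "is_orbit Phi rho x Ob"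
  shows "Phi_rho Phi rho x = Ob"
proof -
  obtain a t where rep: "represents rho a t" using assms(1) by (auto simp: P_n_def)
  show ?thesis using is_orbit_eq_orbit_at[OF rep assms(2)] by (simp add: Phi_rho_eq_orbit_at[OF rep])
qed

section \<open>Splicing and shifting schedules\<close>

lemma progressive_shift: "progressive (\<lambda>k. a (k + m)) \<longleftrightarrow> progressive a"
proof -
  have infinite_iff: "infinite {k. P k} \<longleftrightarrow> (\<exists>\<^sub>F k in sequentially. P k)" for P :: "nat \<Rightarrow> bool"
    using frequently_cofinite[of P] by (simp add: cofinite_eq_sequentially)
  have shift: "(\<exists>\<^sub>F k in sequentially. P (k + m)) \<longleftrightarrow> (\<exists>\<^sub>F k in sequentially. P k)" for P
    unfolding frequently_def using eventually_sequentially_seg[of "\<lambda>k. \<not> P k"] by simp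
  have "infinite {k. a (k + m) i} \<longleftrightarrow> infinite {k. a k i}" for i
    using infinite_iff[of "\<lambda>k. a (k + m) i"] infinite_iff[of "\<lambda>k. a k i"] shift[of "\<lambda>k. a k i"]
    by simp
  then show ?thesis by (simp add: progressive_def)
qed

lemma P_n_iff:
  "rho \<in> P_n \<longleftrightarrow>
    (\<exists>t\<in>Seq. (\<forall>s. s \<notin> range t \<longrightarrow> rho s = (\<lambda>_. False)) \<and> progressive (\<lambda>k. rho (t k)))"
  (is "_ \<longleftrightarrow> ?rhs")
proof
  assume "rho \<in> P_n"
  then obtain a t where rep: "represents rho a t" by (auto simp: P_n_def)
  then show ?rhs by (intro bexI[of _ t]) (simp_all add: represents_def)
next
  assume ?rhs
  then obtain t where "represents rho (\<lambda>k. rho (t k)) t" by (auto simp: represents_def)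
  then show "rho \<in> P_n" by (auto simp: P_n_def)
qed

definition schedule_splice ::
    "(real \<Rightarrow> 'n \<Rightarrow> bool) \<Rightarrow> real \<Rightarrow> real \<Rightarrow> (real \<Rightarrow> 'n \<Rightarrow> bool) \<Rightarrow> real \<Rightarrow> 'n \<Rightarrow> bool" where
  "schedule_splice rho1 c1 c2 rho2 =
    (\<lambda>q. if q \<le> c1 then rho1 q else if q \<le> c2 then (\<lambda>_. False) else rho2 q)"

lemma schedule_splice_left: "q \<le> c1 \<Longrightarrow> schedule_splice rho1 c1 c2 rho2 q = rho1 q"
  and schedule_splice_middle: "c1 < q \<Longrightarrow> q \<le> c2 \<Longrightarrow> schedule_splice rho1 c1 c2 rho2 q = (\<lambda>_. False)"
  and schedule_splice_right: "c1 \<le> c2 \<Longrightarrow> c2 < q \<Longrightarrow> schedule_splice rho1 c1 c2 rho2 q = rho2 q"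
  by (simp_all add: schedule_splice_def)

lemma schedule_splice_in_P_n:
  assumes "rho1 \<in> P_n" "rho2 \<in> P_n" "c1 \<le> c2"
  shows "schedule_splice rho1 c1 c2 rho2 \<in> P_n"
proof -
  obtain a1 t1 a2 t2 where rep1: "represents rho1 a1 t1" and rep2: "represents rho2 a2 t2"
    using assms(1,2) by (auto simp: P_n_def)
  obtain K1 where K1: "\<And>k. t1 k \<le> c1 \<longleftrightarrow> k < K1"
    using Seq_threshold[OF represents_Seq[OF rep1]] by blast
  obtain K2 where K2: "\<And>k. t2 k \<le> c2 \<longleftrightarrow> k < K2"
    using Seq_threshold[OF represents_Seq[OF rep2]] by blast
  define t where "t = (\<lambda>k. if k < K1 then t1 k else t2 (k - K1 + K2))"
  let ?rho = "schedule_splice rho1 c1 c2 rho2"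
  have tail: "t (k + K1) = t2 (k + K2)" for k by (simp add: t_def)
  have "t1 k < t2 K2" if "k < K1" for k using K1[of k] K2[of K2] that \<open>c1 \<le> c2\<close> by simp
  then have "t \<in> Seq" unfolding t_def
    by (rule Seq_append[OF represents_Seq[OF rep1] represents_Seq[OF rep2]])
  moreover have "?rho s = (\<lambda>_. False)" if s: "s \<notin> range t" for s
  proof -
    consider "s \<le> c1" | "c1 < s" "s \<le> c2" | "c2 < s" by linarith
    then show ?thesis
    proof cases
      case 1
      have "s \<notin> range t1"
      proof
        assume "s \<in> range t1"
        then obtain k where "s = t1 k" by blast
        with 1 K1[of k] have "s = t k" by (simp add: t_def)
        with s show False by blast
      qed
      with 1 show ?thesis by (simp add: schedule_splice_left represents_off_times[OF rep1])
    next
      case 3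
      have "s \<notin> range t2"
      proof
        assume "s \<in> range t2"
        then obtain k where "s = t2 k" by blast
        with 3 K2[of k] have "s = t (k - K2 + K1)" using tail[of "k - K2"] by simp
        with s show False by blast
      qed
      with 3 \<open>c1 \<le> c2\<close> show ?thesis by (simp add: schedule_splice_right represents_off_times[OF rep2])
    qed (simp add: schedule_splice_middle)
  qed
  moreover have "progressive (\<lambda>k. ?rho (t k))"
  proof -
    have "c2 < t2 (k + K2)" for k using K2[of "k + K2"] by simp
    then have "(\<lambda>k. ?rho (t (k + K1))) = (\<lambda>k. a2 (k + K2))"
      using \<open>c1 \<le> c2\<close> by (simp add: tail schedule_splice_right represents_at_times[OF rep2])
    moreover have "progressive a2" using rep2 by (simp add: represents_def)
    ultimately show ?thesis
      using progressive_shift[of "\<lambda>k. ?rho (t k)" K1] progressive_shift[of a2 K2] by simp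
  qed
  ultimately show ?thesis unfolding P_n_iff by blast
qed

lemma is_orbit_schedule_splice_settled:
  assumes orb1: "is_orbit Phi rho1 x1 O1" and "s < r" "c1 < r"
    and idle: "\<And>q. s < q \<Longrightarrow> q < r \<Longrightarrow> schedule_splice rho1 c1 c2 rho2 q = (\<lambda>_. False)"
  shows "O1 (min s c1) = O1 c1"
proof (rule is_orbit_const[OF orb1])
  fix q assume "min s c1 < q" "q \<le> c1"
  then have "s < q" "q < r" using \<open>c1 < r\<close> by (auto simp: min_less_iff_disj)
  then have "schedule_splice rho1 c1 c2 rho2 q = (\<lambda>_. False)" by (rule idle)
  with \<open>q \<le> c1\<close> show "rho1 q = (\<lambda>_. False)" by (simp add: schedule_splice_left)
qed simp

lemma is_orbit_schedule_splice:
  assumes orb1: "is_orbit Phi rho1 x1 O1" and orb2: "is_orbit Phi rho2 x2 O2"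
    and "c1 \<le> c2" and meet: "O1 c1 = O2 c2"
  shows "is_orbit Phi (schedule_splice rho1 c1 c2 rho2) x1 (\<lambda>s. if s \<le> c2 then O1 (min s c1) else O2 s)"
proof -
  let ?rho = "schedule_splice rho1 c1 c2 rho2"
  define Ob where "Ob = (\<lambda>s. if s \<le> c2 then O1 (min s c1) else O2 s)"
  have "Ob r = Phi_nu Phi (?rho r) (Ob s)"
    if "s < r" and idle: "\<And>q. s < q \<Longrightarrow> q < r \<Longrightarrow> ?rho q = (\<lambda>_. False)" for s r
  proof -
    consider "r \<le> c1" | "c1 < r" "r \<le> c2" | "c2 < r" by linarith
    then show ?thesis
    proof cases
      case 1
      have "O1 r = Phi_nu Phi (rho1 r) (O1 s)"
      proof (rule is_orbit_jump[OF orb1 \<open>s < r\<close>])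
        fix q assume "s < q" "q < r"
        with idle[of q] 1 show "rho1 q = (\<lambda>_. False)" by (simp add: schedule_splice_left)
      qed
      with 1 \<open>s < r\<close> \<open>c1 \<le> c2\<close> show ?thesis by (simp add: Ob_def schedule_splice_left)
    next
      case 2
      with is_orbit_schedule_splice_settled[OF orb1 \<open>s < r\<close> _ idle] \<open>s < r\<close> show ?thesis
        by (simp add: Ob_def schedule_splice_middle)
    next
      case 3
      define s' where "s' = max s c2"
      have "O2 r = Phi_nu Phi (rho2 r) (O2 s')"
      proof (rule is_orbit_jump[OF orb2])
        show "s' < r" using \<open>s < r\<close> 3 by (simp add: s'_def)
        fix q assume "s' < q" "q < r"
        with idle[of q] \<open>c1 \<le> c2\<close> show "rho2 q = (\<lambda>_. False)" by (simp add: s'_def schedule_splice_right)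
      qed
      moreover have "Ob s = O2 s'"
      proof (cases "c2 < s")
        case False
        have "c1 < r" using 3 \<open>c1 \<le> c2\<close> by simp
        with False is_orbit_schedule_splice_settled[OF orb1 \<open>s < r\<close> _ idle] meet \<open>c1 \<le> c2\<close> show ?thesis
          by (simp add: Ob_def s'_def)
      qed (simp add: Ob_def s'_def)
      ultimately show ?thesis using 3 \<open>c1 \<le> c2\<close> by (simp add: Ob_def schedule_splice_right)
    qed
  qed
  moreover obtain T where "\<forall>s<T. O1 s = x1" using is_orbit_initial[OF orb1] by blast
  then have "\<forall>s<min T c1. Ob s = x1" using \<open>c1 \<le> c2\<close> by (simp add: Ob_def)
  ultimately show ?thesis unfolding is_orbit_def Ob_def[symmetric] by blast
qed

lemma Phi_rho_schedule_splice:
  assumes P_n: "rho1 \<in> P_n" "rho2 \<in> P_n" and "c1 \<le> c2"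
    and meet: "Phi_rho Phi rho1 x1 c1 = Phi_rho Phi rho2 x2 c2" and "c2 < q"
  shows "Phi_rho Phi (schedule_splice rho1 c1 c2 rho2) x1 q = Phi_rho Phi rho2 x2 q"
proof -
  have "Phi_rho Phi (schedule_splice rho1 c1 c2 rho2) x1
      = (\<lambda>s. if s \<le> c2 then Phi_rho Phi rho1 x1 (min s c1) else Phi_rho Phi rho2 x2 s)"
    by (rule Phi_rho_unique[OF schedule_splice_in_P_n[OF P_n \<open>c1 \<le> c2\<close>]
          is_orbit_schedule_splice[OF Phi_rho_is_orbit[OF P_n(1)] Phi_rho_is_orbit[OF P_n(2)]
            \<open>c1 \<le> c2\<close> meet]])
  with \<open>c2 < q\<close> show ?thesis by simp
qed

definition schedule_shift :: "real \<Rightarrow> (real \<Rightarrow> 'n \<Rightarrow> bool) \<Rightarrow> real \<Rightarrow> 'n \<Rightarrow> bool" where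
  "schedule_shift d rho = (\<lambda>q. rho (q - d))"

lemma schedule_shift_in_P_n:
  assumes "rho \<in> P_n"
  shows "schedule_shift d rho \<in> P_n"
proof -
  obtain t where t: "t \<in> Seq" "\<forall>s. s \<notin> range t \<longrightarrow> rho s = (\<lambda>_. False)" "progressive (\<lambda>k. rho (t k))"
    using assms unfolding P_n_iff by blast
  have "\<exists>k. M < t k + d" for M
  proof -
    obtain k where "M - d < t k" using Seq_unbounded[OF t(1)] by blast
    then show ?thesis by (intro exI[of _ k]) simp
  qed
  with t(1) have "(\<lambda>k. t k + d) \<in> Seq" by (simp add: Seq_def strict_mono_def)
  moreover have "schedule_shift d rho s = (\<lambda>_. False)" if "s \<notin> range (\<lambda>k. t k + d)" for s
  proof -
    have "s - d \<notin> range t"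
    proof
      assume "s - d \<in> range t"
      then obtain k where "s = t k + d" by (metis diff_eq_eq rangeE)
      with that show False by blast
    qed
    with t(2) show ?thesis by (simp add: schedule_shift_def)
  qed
  moreover have "progressive (\<lambda>k. schedule_shift d rho (t k + d))"
    using t(3) by (simp add: schedule_shift_def)
  ultimately show ?thesis unfolding P_n_iff by blast
qed

lemma is_orbit_schedule_shift:
  assumes orb: "is_orbit Phi rho x Ob"
  shows "is_orbit Phi (schedule_shift d rho) x (\<lambda>q. Ob (q - d))"
  unfolding is_orbit_def
proof (intro conjI allI impI)
  obtain T where "\<forall>s<T. Ob s = x" using is_orbit_initial[OF orb] by blast
  then show "\<exists>T. \<forall>s<T. Ob (s - d) = x" by (intro exI[of _ "T + d"]) simp
next
  fix s r :: real
  assume "s < r" and idle: "\<forall>q. s < q \<and> q < r \<longrightarrow> schedule_shift d rho q = (\<lambda>_. False)"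
  have "Ob (r - d) = Phi_nu Phi (rho (r - d)) (Ob (s - d))"
  proof (rule is_orbit_jump[OF orb])
    show "s - d < r - d" using \<open>s < r\<close> by simp
    fix q assume "s - d < q" "q < r - d"
    with idle have "schedule_shift d rho (q + d) = (\<lambda>_. False)" by simp
    then show "rho q = (\<lambda>_. False)" by (simp add: schedule_shift_def)
  qed
  then show "Ob (r - d) = Phi_nu Phi (schedule_shift d rho r) (Ob (s - d))"
    by (simp add: schedule_shift_def)
qed

lemma Phi_rho_schedule_shift:
  assumes "rho \<in> P_n"
  shows "Phi_rho Phi (schedule_shift d rho) x q = Phi_rho Phi rho x (q - d)"
proof -
  have "Phi_rho Phi (schedule_shift d rho) x = (\<lambda>q. Phi_rho Phi rho x (q - d))"
    by (rule Phi_rho_unique[OF schedule_shift_in_P_n[OF assms]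
          is_orbit_schedule_shift[OF Phi_rho_is_orbit[OF assms]]])
  then show ?thesis by simp
qed

section \<open>Omega-limit sets\<close>

lemma frequently_at_top_SeqE:
  fixes P :: "real \<Rightarrow> bool"
  assumes "\<exists>\<^sub>F q in at_top. P q"
  obtains s where "s \<in> Seq" "\<And>k. P (s k)"
proof -
  have later: "\<exists>q\<ge>T. P q" for T
    using assms by (simp add: frequently_def eventually_at_top_linorder)
  have "\<exists>s. \<forall>k. (P (s k) \<and> s k \<ge> real k) \<and> s k < s (Suc k)"
  proof (rule dependent_nat_choice)
    show "\<exists>q. P q \<and> q \<ge> real 0" using later[of 0] by auto
    fix q k assume "P q \<and> q \<ge> real k"
    obtain q' where "q' \<ge> max (q + 1) (real (Suc k))" "P q'" using later by blast
    then show "\<exists>q'. (P q' \<and> q' \<ge> real (Suc k)) \<and> q < q'" by auto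
  qed
  then obtain s where s: "\<And>k. P (s k) \<and> s k \<ge> real k" "\<And>k. s k < s (Suc k)" by blast
  have "\<exists>k. M < s k" for M
  proof -
    obtain k :: nat where "M < real k" using reals_Archimedean2 by blast
    with s(1)[of k] show ?thesis by (intro exI[of _ k]) simp
  qed
  with s have "s \<in> Seq" by (simp add: Seq_def strict_mono_Suc_iff)
  with s(1) show thesis by (intro that) auto
qed

definition omega_limit :: "(real \<Rightarrow> 'a) \<Rightarrow> 'a set" where
  "omega_limit f = {v. \<exists>s\<in>Seq. \<forall>\<^sub>F k in sequentially. f (s k) = v}"

lemma omega_rho_eq_omega_limit: "omega_rho Phi rho mu = omega_limit (Phi_rho Phi rho mu)"
  by (simp add: omega_rho_def omega_limit_def)

lemma mem_omega_limit_iff: "v \<in> omega_limit f \<longleftrightarrow> (\<exists>\<^sub>F q in at_top. f q = v)"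
proof
  assume "v \<in> omega_limit f"
  then obtain s K where s: "s \<in> Seq" and K: "\<And>k. k \<ge> K \<Longrightarrow> f (s k) = v"
    unfolding omega_limit_def eventually_sequentially by blast
  have "\<exists>q\<ge>T. f q = v" for T
  proof -
    obtain k where "T < s k" using Seq_unbounded[OF s] by blast
    moreover have "s k \<le> s (max k K)"
      using s strict_mono_less_eq[of s] by (simp add: Seq_def)
    ultimately show ?thesis using K[of "max k K"] by (intro exI[of _ "s (max k K)"]) simp
  qed
  then show "\<exists>\<^sub>F q in at_top. f q = v"
    by (simp add: frequently_def eventually_at_top_linorder not_le)
next
  assume "\<exists>\<^sub>F q in at_top. f q = v"
  then obtain s where "s \<in> Seq" "\<And>k. f (s k) = v" by (rule frequently_at_top_SeqE[of "\<lambda>q. f q = v"]) blast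
  then show "v \<in> omega_limit f" unfolding omega_limit_def by (intro CollectI bexI[of _ s]) simp_all
qed

lemma omega_limit_cong:
  assumes "\<forall>\<^sub>F q in at_top. f q = g q"
  shows "omega_limit f = omega_limit g"
proof (rule set_eqI)
  fix v show "v \<in> omega_limit f \<longleftrightarrow> v \<in> omega_limit g"
    unfolding mem_omega_limit_iff by (rule frequently_cong[OF assms]) simp
qed

lemma eventually_in_omega_limit:
  fixes f :: "real \<Rightarrow> 'a::finite"
  shows "\<forall>\<^sub>F q in at_top. f q \<in> omega_limit f"
proof -
  have "\<forall>\<^sub>F q in at_top. f q = v \<longrightarrow> v \<in> omega_limit f" for v
    by (cases "v \<in> omega_limit f") (simp_all add: mem_omega_limit_iff not_frequently)
  then have "\<forall>\<^sub>F q in at_top. \<forall>v. f q = v \<longrightarrow> v \<in> omega_limit f"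
    by (rule eventually_all_finite)
  then show ?thesis by simp
qed

lemma omega_limit_eventually_const:
  assumes "\<forall>\<^sub>F q in at_top. f q = c"
  shows "omega_limit f = {c}"
proof -
  have "omega_limit f = omega_limit (\<lambda>_. c)" by (rule omega_limit_cong) (use assms in simp)
  also have "\<dots> = {c}"
    by (simp add: set_eq_iff mem_omega_limit_iff eq_commute[of c])
  finally show ?thesis .
qed

lemma eventually_const_if_omega_limit_subset:
  fixes f :: "real \<Rightarrow> 'a::finite"
  assumes "omega_limit f \<subseteq> {c}"
  shows "\<forall>\<^sub>F q in at_top. f q = c"
  using eventually_in_omega_limit[of f] by eventually_elim (use assms in blast)

lemma eventually_at_top_diff:
  fixes d :: real
  assumes "\<forall>\<^sub>F q in at_top. P q"
  shows "\<forall>\<^sub>F q in at_top. P (q - d)"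
proof -
  obtain N where "\<forall>q\<ge>N. P q" using assms by (auto simp: eventually_at_top_linorder)
  then have "\<forall>q\<ge>N + d. P (q - d)" by simp
  then show ?thesis by (auto simp: eventually_at_top_linorder)
qed

lemma eventually_const_if_eventually_periodic:
  fixes f :: "real \<Rightarrow> 'a"
  assumes periodic: "\<And>d. \<forall>\<^sub>F q in at_top. f (q - d) = f q"
  shows "\<exists>c. \<forall>\<^sub>F q in at_top. f q = c"
proof -
  obtain T where T: "\<And>q. q \<ge> T \<Longrightarrow> f (q - 1) = f q"
    using periodic[of 1] by (auto simp: eventually_at_top_linorder)
  have unit_steps: "f (q + real n) = f q" if "q \<ge> T - 1" for q n
  proof (induction n)
    case (Suc n)
    have "f (q + real (Suc n) - 1) = f (q + real (Suc n))" using that by (intro T) simp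
    with Suc.IH show ?case by simp
  qed simp
  \<comment> \<open>unit steps carry q and T far out, where the period q - T identifies them\<close>
  have "f q = f T" if "q \<ge> T" for q
  proof -
    obtain N where N: "\<And>p. p \<ge> N \<Longrightarrow> f (p - (q - T)) = f p"
      using periodic[of "q - T"] by (auto simp: eventually_at_top_linorder)
    obtain n :: nat where "N - q < real n" using reals_Archimedean2 by blast
    then have "f (T + real n) = f (q + real n)" using N[of "q + real n"] by (simp add: add.commute)
    with that show ?thesis using unit_steps[of q n] unit_steps[of T n] by simp
  qed
  then show ?thesis by (auto simp: eventually_at_top_linorder)
qed

lemma fixed_point_if_eventually_const:
  assumes "rho \<in> P_n" and const: "\<forall>\<^sub>F q in at_top. Phi_rho Phi rho mu q = w"
  shows "Phi w = w"
proof
  fix i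
  obtain a t where rep: "represents rho a t" using assms(1) by (auto simp: P_n_def)
  obtain T where T: "\<And>q. q \<ge> T \<Longrightarrow> Phi_rho Phi rho mu q = w"
    using const by (auto simp: eventually_at_top_linorder)
  obtain K where "T < t K" using Seq_unbounded[OF represents_Seq[OF rep]] by blast
  have "infinite {k. a k i}" using rep by (simp add: represents_def progressive_def)
  then obtain k where "K < k" "a k i" by (auto simp: infinite_nat_iff_unbounded)
  then obtain j where k: "k = Suc j" using gr0_conv_Suc by blast
  have mono: "strict_mono t" by (rule represents_strict_mono[OF rep])
  with \<open>K < k\<close> k have "t K \<le> t j" "t j < t k"
    using strict_mono_less_eq[OF mono, of K j] strict_monoD[OF mono, of j k] by simp_all
  with \<open>T < t K\<close> have "Phi_rho Phi rho mu (t j) = w" "Phi_rho Phi rho mu (t k) = w"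
    using T by simp_all
  then have "w = Phi_nu Phi (a k) w"
    using is_orbit_at_next_time[OF rep Phi_rho_is_orbit[OF assms(1)], where k = j] k by simp
  then have "w i = Phi_nu Phi (a k) w i" by simp
  with \<open>a k i\<close> show "Phi w i = w i" by (simp add: Phi_nu_def)
qed

lemma Phi_rho_from_fixed_point:
  assumes "rho \<in> P_n" "Phi w = w"
  shows "Phi_rho Phi rho w = (\<lambda>_. w)"
proof (rule Phi_rho_unique[OF assms(1)])
  have "Phi_nu Phi a w = w" for a using assms(2) by (auto simp: Phi_nu_def)
  then show "is_orbit Phi rho w (\<lambda>_. w)" by (simp add: is_orbit_def)
qed

section \<open>Basins\<close>

lemma W_up_orb_eq_W_up_omega:
  fixes Phi :: "('n::finite \<Rightarrow> bool) \<Rightarrow> ('n \<Rightarrow> bool)"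
  assumes "rho \<in> P_n"
  shows "W_up_orb Phi rho mu = W_up_omega Phi rho mu"
proof
  show "W_up_orb Phi rho mu \<subseteq> W_up_omega Phi rho mu"
  proof
    fix x assume "x \<in> W_up_orb Phi rho mu"
    then obtain rho' where "rho' \<in> P_n"
      and "\<forall>\<^sub>F q in at_top. Phi_rho Phi rho' x q = Phi_rho Phi rho mu q"
      by (auto simp: W_up_orb_def eventually_at_top_linorder)
    then show "x \<in> W_up_omega Phi rho mu"
      using omega_limit_cong unfolding W_up_omega_def omega_rho_eq_omega_limit by blast
  qed
next
  show "W_up_omega Phi rho mu \<subseteq> W_up_orb Phi rho mu"
  proof
    fix x assume "x \<in> W_up_omega Phi rho mu"
    then obtain rho' where rho': "rho' \<in> P_n"
      and same_omega: "omega_limit (Phi_rho Phi rho' x) = omega_limit (Phi_rho Phi rho mu)"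
      by (auto simp: W_up_omega_def omega_rho_eq_omega_limit)
    obtain c1 where "Phi_rho Phi rho' x c1 \<in> omega_limit (Phi_rho Phi rho' x)"
      using eventually_happens'[OF _ eventually_in_omega_limit] by auto
    then have "\<exists>\<^sub>F q in at_top. Phi_rho Phi rho mu q = Phi_rho Phi rho' x c1"
      by (simp add: same_omega mem_omega_limit_iff)
    then have "\<exists>c2\<ge>c1. Phi_rho Phi rho mu c2 = Phi_rho Phi rho' x c1"
      by (simp add: frequently_def eventually_at_top_linorder)
    then obtain c2 where "c1 \<le> c2" "Phi_rho Phi rho' x c1 = Phi_rho Phi rho mu c2"
      by (auto dest: sym)
    then have "\<forall>q\<ge>c2 + 1. Phi_rho Phi (schedule_splice rho' c1 c2 rho) x q = Phi_rho Phi rho mu q"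
      using Phi_rho_schedule_splice[OF rho' assms] by simp
    with schedule_splice_in_P_n[OF rho' assms \<open>c1 \<le> c2\<close>] show "x \<in> W_up_orb Phi rho mu"
      unfolding W_up_orb_def by blast
  qed
qed

lemma Or_rho_subset_W_up_orb:
  assumes "rho \<in> P_n"
  shows "Or_rho Phi rho mu \<subseteq> W_up_orb Phi rho mu"
proof
  fix x assume "x \<in> Or_rho Phi rho mu"
  then obtain c2 where x: "x = Phi_rho Phi rho mu c2" by (auto simp: Or_rho_def)
  obtain T where "\<forall>s<T. Phi_rho Phi rho x s = x"
    using is_orbit_initial[OF Phi_rho_is_orbit[OF assms]] by blast
  then have "Phi_rho Phi rho x (min (T - 1) c2) = Phi_rho Phi rho mu c2" by (simp add: x)
  then have "\<forall>q\<ge>c2 + 1. Phi_rho Phi (schedule_splice rho (min (T - 1) c2) c2 rho) x q = Phi_rho Phi rho mu q"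
    using Phi_rho_schedule_splice[OF assms assms] by simp
  with schedule_splice_in_P_n[OF assms assms] show "x \<in> W_up_orb Phi rho mu"
    unfolding W_up_orb_def by (intro CollectI bexI) auto
qed

lemma W_low_orb_subset_W_low_omega: "W_low_orb Phi rho mu \<subseteq> W_low_omega Phi rho mu"
proof
  fix x assume x: "x \<in> W_low_orb Phi rho mu"
  have "omega_rho Phi rho' x = omega_rho Phi rho mu" if "rho' \<in> P_n" for rho'
  proof -
    have "\<forall>\<^sub>F q in at_top. Phi_rho Phi rho' x q = Phi_rho Phi rho mu q"
      using x that by (simp add: W_low_orb_def eventually_at_top_linorder)
    then show ?thesis unfolding omega_rho_eq_omega_limit by (rule omega_limit_cong)
  qed
  then show "x \<in> W_low_omega Phi rho mu" by (simp add: W_low_omega_def)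
qed

lemma eventually_periodic_if_W_low_orb:
  assumes "rho \<in> P_n" "x \<in> W_low_orb Phi rho mu"
  shows "\<forall>\<^sub>F q in at_top. Phi_rho Phi rho mu (q - d) = Phi_rho Phi rho mu q"
proof -
  have attracts: "\<forall>\<^sub>F q in at_top. Phi_rho Phi rho' x q = Phi_rho Phi rho mu q" if "rho' \<in> P_n" for rho'
    using assms(2) that by (simp add: W_low_orb_def eventually_at_top_linorder)
  have "\<forall>\<^sub>F q in at_top. Phi_rho Phi rho x (q - d) = Phi_rho Phi rho mu (q - d)"
    by (rule eventually_at_top_diff[OF attracts[OF assms(1)]])
  moreover have "\<forall>\<^sub>F q in at_top. Phi_rho Phi rho x (q - d) = Phi_rho Phi rho mu q"
    using attracts[OF schedule_shift_in_P_n[OF assms(1)]] by (simp add: Phi_rho_schedule_shift[OF assms(1)])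
  ultimately show ?thesis by eventually_elim simp
qed

lemma W_low_orb_nonempty_iff:
  fixes Phi :: "('n::finite \<Rightarrow> bool) \<Rightarrow> ('n \<Rightarrow> bool)"
  assumes "rho \<in> P_n"
  shows "W_low_orb Phi rho mu \<noteq> {} \<longleftrightarrow> card (omega_rho Phi rho mu) = 1"
proof
  assume "W_low_orb Phi rho mu \<noteq> {}"
  then obtain x where "x \<in> W_low_orb Phi rho mu" by blast
  then obtain c where "\<forall>\<^sub>F q in at_top. Phi_rho Phi rho mu q = c"
    using eventually_const_if_eventually_periodic eventually_periodic_if_W_low_orb[OF assms] by blast
  then show "card (omega_rho Phi rho mu) = 1"
    by (simp add: omega_rho_eq_omega_limit omega_limit_eventually_const)
next
  assume "card (omega_rho Phi rho mu) = 1"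
  then obtain w where "omega_limit (Phi_rho Phi rho mu) = {w}"
    by (auto simp: omega_rho_eq_omega_limit card_1_singleton_iff)
  then have limit: "\<forall>\<^sub>F q in at_top. Phi_rho Phi rho mu q = w"
    by (simp add: eventually_const_if_omega_limit_subset)
  then have fixed: "Phi w = w" by (rule fixed_point_if_eventually_const[OF assms])
  have "\<forall>\<^sub>F q in at_top. Phi_rho Phi rho' w q = Phi_rho Phi rho mu q" if "rho' \<in> P_n" for rho'
    using limit by eventually_elim (simp add: Phi_rho_from_fixed_point[where Phi = Phi, OF that fixed])
  then have "w \<in> W_low_orb Phi rho mu"
    by (simp add: W_low_orb_def eventually_at_top_linorder[symmetric])
  then show "W_low_orb Phi rho mu \<noteq> {}" by blast
qed

lemma W_low_omega_subset_W_low_pt: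
  "omega_rho Phi rho mu = {w} \<Longrightarrow> W_low_omega Phi rho mu \<subseteq> W_low_pt Phi w"
  by (auto simp: W_low_omega_def W_low_pt_def)

lemma W_low_pt_subset_W_low_orb:
  fixes Phi :: "('n::finite \<Rightarrow> bool) \<Rightarrow> ('n \<Rightarrow> bool)"
  assumes "omega_rho Phi rho mu = {w}"
  shows "W_low_pt Phi w \<subseteq> W_low_orb Phi rho mu"
proof
  fix x assume x: "x \<in> W_low_pt Phi w"
  have limit: "\<forall>\<^sub>F q in at_top. Phi_rho Phi rho mu q = w"
    using assms by (simp add: omega_rho_eq_omega_limit eventually_const_if_omega_limit_subset)
  have "\<forall>\<^sub>F q in at_top. Phi_rho Phi rho' x q = Phi_rho Phi rho mu q" if "rho' \<in> P_n" for rho'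
  proof -
    have "\<forall>\<^sub>F q in at_top. Phi_rho Phi rho' x q = w"
      using x that by (simp add: W_low_pt_def omega_rho_eq_omega_limit eventually_const_if_omega_limit_subset)
    with limit show ?thesis by eventually_elim simp
  qed
  then show "x \<in> W_low_orb Phi rho mu"
    by (simp add: W_low_orb_def eventually_at_top_linorder[symmetric])
qed

theorem theorem51:
  fixes Phi :: "('n::finite \<Rightarrow> bool) \<Rightarrow> ('n \<Rightarrow> bool)"
    and mu :: "'n \<Rightarrow> bool"
    and rho :: "real \<Rightarrow> 'n \<Rightarrow> bool"
  assumes "rho \<in> P_n"
  shows "W_up_orb Phi rho mu = W_up_omega Phi rho mu
    \<and> (Or_rho Phi rho mu \<subseteq> W_up_orb Phi rho mu \<and> W_up_orb Phi rho mu \<noteq> {})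
    \<and> W_low_orb Phi rho mu \<subseteq> W_low_omega Phi rho mu
    \<and> ((W_low_orb Phi rho mu \<noteq> {} \<longleftrightarrow> card (omega_rho Phi rho mu) = 1)
        \<and> (card (omega_rho Phi rho mu) = 1 \<longrightarrow>
              W_low_orb Phi rho mu \<noteq> {} \<and> W_low_omega Phi rho mu \<noteq> {}))
    \<and> (\<forall>mu'. omega_rho Phi rho mu = {mu'} \<longrightarrow>
           W_low_orb Phi rho mu = W_low_omega Phi rho mu \<and> W_low_omega Phi rho mu = W_low_pt Phi mu')"
proof -
  have low: "W_low_orb Phi rho mu \<subseteq> W_low_omega Phi rho mu"
    by (rule W_low_orb_subset_W_low_omega)
  have singleton: "W_low_orb Phi rho mu = W_low_omega Phi rho mu \<and> W_low_omega Phi rho mu = W_low_pt Phi w"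
    if "omega_rho Phi rho mu = {w}" for w
    using low W_low_omega_subset_W_low_pt[OF that] W_low_pt_subset_W_low_orb[OF that] by blast
  have "Or_rho Phi rho mu \<noteq> {}" by (simp add: Or_rho_def)
  then show ?thesis
    using W_up_orb_eq_W_up_omega[OF assms] Or_rho_subset_W_up_orb[OF assms]
      W_low_orb_nonempty_iff[OF assms] low singleton
    by blast
qed

end
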